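(* Let $\alpha,\beta$ be real constants and $F$ a smooth real function of one variable. Consider the cylindrical Westervelt-type equation $$p_{rr}+\frac{1}{r}p_r+F(p)_{tt}+\alpha p_{ttt}+\beta\Big(p_{rr}+\frac{1}{r}p_r\Big)_t=0$$ for $p(r,t)$, $r>0$. Then every smooth solution satisfies the conservation laws $\partial_rT^r+\partial_tT^t=0$ with $(T^r,T^t)$ given by $$\Big(p-rp_r\ln r+\beta\big(p_t-r\ln(r)\,p_{tr}\big),\ -r\ln(r)\,\big(F'(p)p_t+\alpha p_{tt}\big)\Big),$$ $$\Big(t\big(p-rp_r\ln r+\beta(p_t-r\ln(r)\,p_{tr})\big),\ -r\ln(r)\,\big(t(F'(p)p_t+\alpha p_{tt})-F(p)-\alpha p_t\big)\Big),$$ corresponding to the multipliers $r\ln r$ and $rt\ln r$, respectively.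
   Context: Subscripts denote partial derivatives. *)

theory Defs
  imports "HOL-Analysis.Analysis"
begin

definition Dr :: "(real \<Rightarrow> real \<Rightarrow> real) \<Rightarrow> real \<Rightarrow> real \<Rightarrow> real" where
  "Dr f r t = deriv (\<lambda>s. f s t) r"

definition Dt :: "(real \<Rightarrow> real \<Rightarrow> real) \<Rightarrow> real \<Rightarrow> real \<Rightarrow> real" where
  "Dt f r t = deriv (\<lambda>s. f r s) t"

fun iter_pd :: "bool list \<Rightarrow> (real \<Rightarrow> real \<Rightarrow> real) \<Rightarrow> real \<Rightarrow> real \<Rightarrow> real" where
  "iter_pd [] f = f"
| "iter_pd (b # bs) f = iter_pd bs (if b then Dr f else Dt f)"

definition smooth2_on :: "(real \<times> real) set \<Rightarrow> (real \<Rightarrow> real \<Rightarrow> real) \<Rightarrow> bool" where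
  "smooth2_on U f \<longleftrightarrow>
     (\<forall>bs. \<forall>z\<in>U. (\<lambda>w. iter_pd bs f (fst w) (snd w)) differentiable (at z))"

definition smooth1 :: "(real \<Rightarrow> real) \<Rightarrow> bool" where
  "smooth1 F \<longleftrightarrow> (\<forall>n x. ((deriv ^^ n) F) differentiable (at x))"

end

theory Submission imports Defs begin

(* The multiplier r ln r is annihilated by the formal adjoint of the radial Laplacian
   L u = u_rr + u_r / r, and accordingly r ln r * L u = - d/dr (u - r ln r * u_r).
   Applying this to u = p and u = p_t (mixed partials of the smooth p commute, so L(p)_t = L(p_t))
   and writing F(p)_tt = (F'(p) p_t)_t turns r ln r times the equation into a divergence, which is
   the first law. For the multiplier t r ln r, differentiating the factor t produces the extra term
   - r ln r (F'(p) p_t + alpha p_tt), which is minus the t-derivative of r ln r (F(p) + alpha p_t);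
   adding the latter to the time component cancels it. *)

lemma smooth2_on_Dr:
  assumes "smooth2_on U q"
  shows "smooth2_on U (Dr q)"
  unfolding smooth2_on_def
proof (intro allI ballI)
  fix bs z assume "z \<in> U"
  then have "(\<lambda>w. iter_pd (True # bs) q (fst w) (snd w)) differentiable at z"
    using assms unfolding smooth2_on_def by blast
  then show "(\<lambda>w. iter_pd bs (Dr q) (fst w) (snd w)) differentiable at z" by simp
qed

lemma smooth2_on_Dt:
  assumes "smooth2_on U q"
  shows "smooth2_on U (Dt q)"
  unfolding smooth2_on_def
proof (intro allI ballI)
  fix bs z assume "z \<in> U"
  then have "(\<lambda>w. iter_pd (False # bs) q (fst w) (snd w)) differentiable at z"
    using assms unfolding smooth2_on_def by blast
  then show "(\<lambda>w. iter_pd bs (Dt q) (fst w) (snd w)) differentiable at z" by simp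
qed

lemma smooth2_on_differentiable:
  assumes "smooth2_on U q" "z \<in> U"
  shows "(\<lambda>w. q (fst w) (snd w)) differentiable (at z)"
proof -
  have "(\<lambda>w. iter_pd [] q (fst w) (snd w)) differentiable at z"
    using assms unfolding smooth2_on_def by blast
  then show ?thesis by simp
qed

lemma smooth2_on_continuous_on:
  assumes "smooth2_on U q"
  shows "continuous_on U (\<lambda>w. q (fst w) (snd w))"
proof (intro continuous_at_imp_continuous_on ballI)
  fix z assume "z \<in> U"
  then show "isCont (\<lambda>w. q (fst w) (snd w)) z"
    by (intro differentiable_imp_continuous_within smooth2_on_differentiable[OF assms])
qed

lemma smooth2_on_has_Dr:
  assumes "smooth2_on U q" "(r, t) \<in> U"
  shows "((\<lambda>s. q s t) has_real_derivative Dr q r t) (at r)"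
proof -
  obtain f' where f': "((\<lambda>w. q (fst w) (snd w)) has_derivative f') (at (r, t))"
    using smooth2_on_differentiable[OF assms] unfolding differentiable_def by blast
  have "((\<lambda>s. (s, t)) has_derivative (\<lambda>h. (h, 0))) (at r)"
    by (auto intro!: derivative_eq_intros)
  from has_derivative_compose[OF this f']
  have "(\<lambda>s. q s t) differentiable at r" unfolding differentiable_def by auto
  then show ?thesis
    unfolding Dr_def by (rule iffD2[OF DERIV_deriv_iff_real_differentiable])
qed

lemma smooth2_on_has_Dt:
  assumes "smooth2_on U q" "(r, t) \<in> U"
  shows "(q r has_real_derivative Dt q r t) (at t)"
proof -
  obtain f' where f': "((\<lambda>w. q (fst w) (snd w)) has_derivative f') (at (r, t))"
    using smooth2_on_differentiable[OF assms] unfolding differentiable_def by blast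
  have "((\<lambda>s. (r, s)) has_derivative (\<lambda>h. (0, h))) (at t)"
    by (auto intro!: derivative_eq_intros)
  from has_derivative_compose[OF this f']
  have "q r differentiable at t" unfolding differentiable_def by auto
  then show ?thesis
    unfolding Dt_def by (rule iffD2[OF DERIV_deriv_iff_real_differentiable])
qed

lemma Dr_eqI: "((\<lambda>s. f s t) has_real_derivative D) (at r) \<Longrightarrow> Dr f r t = D"
  unfolding Dr_def by (rule DERIV_imp_deriv)

lemma Dt_eqI: "(f r has_real_derivative D) (at t) \<Longrightarrow> Dt f r t = D"
  unfolding Dt_def by (rule DERIV_imp_deriv)

lemma smooth2_on_continuous_on_slice:
  assumes "smooth2_on U q" "{r} \<times> S \<subseteq> U"
  shows "continuous_on S (q r)"
proof (intro continuous_at_imp_continuous_on ballI)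
  fix s assume "s \<in> S"
  then show "isCont (q r) s"
    using assms by (intro DERIV_isCont[OF smooth2_on_has_Dt[OF assms(1)]]) auto
qed

lemma smooth2_on_has_integral_Dt:
  assumes "smooth2_on U q" "{r} \<times> {a..b} \<subseteq> U" "a \<le> b"
  shows "(Dt q r has_integral q r b - q r a) {a..b}"
proof (rule fundamental_theorem_of_calculus[OF assms(3)])
  fix s assume "s \<in> {a..b}"
  then have "(q r has_real_derivative Dt q r s) (at s)"
    using assms by (intro smooth2_on_has_Dt[OF assms(1)]) auto
  then show "(q r has_vector_derivative Dt q r s) (at s within {a..b})"
    unfolding has_real_derivative_iff_has_vector_derivative[symmetric]
    by (rule has_field_derivative_at_within)
qed

lemma Dr_diff_eq_integral_Dr_Dt:
  assumes q: "smooth2_on U q" and I: "open I" "convex I" "r \<in> I"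
    and box: "I \<times> {a..b} \<subseteq> U" and "a \<le> b"
  shows "Dr q r b - Dr q r a = integral {a..b} (Dr (Dt q) r)"
proof -
  have qt: "smooth2_on U (Dt q)" using q by (rule smooth2_on_Dt)
  have "((\<lambda>x. integral (cbox a b) (Dt q x)) has_field_derivative integral (cbox a b) (Dr (Dt q) r))
      (at r within I)"
  proof (rule leibniz_rule_field_derivative)
    fix x s assume "x \<in> I" "s \<in> cbox a b"
    then have "(x, s) \<in> U" using box by auto
    then show "((\<lambda>x. Dt q x s) has_field_derivative Dr (Dt q) x s) (at x within I)"
      by (rule has_field_derivative_at_within[OF smooth2_on_has_Dr[OF qt]])
  next
    fix x assume "x \<in> I"
    then have "continuous_on {a..b} (Dt q x)"
      using box by (intro smooth2_on_continuous_on_slice[OF qt]) auto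
    then show "Dt q x integrable_on cbox a b"
      unfolding cbox_interval by (rule integrable_continuous_real)
  next
    have "continuous_on (I \<times> cbox a b) (\<lambda>w. Dr (Dt q) (fst w) (snd w))"
      using smooth2_on_continuous_on[OF smooth2_on_Dr[OF qt]] box
      unfolding cbox_interval by (rule continuous_on_subset)
    then show "continuous_on (I \<times> cbox a b) (\<lambda>(x, y). Dr (Dt q) x y)"
      by (simp add: case_prod_beta)
  qed (fact I)+
  then have "((\<lambda>x. integral {a..b} (Dt q x)) has_field_derivative integral {a..b} (Dr (Dt q) r))
      (at r)"
    unfolding at_within_open[OF \<open>r \<in> I\<close> \<open>open I\<close>] cbox_interval .
  moreover have "integral {a..b} (Dt q x) = q x b - q x a" if "x \<in> I" for x
    using that box \<open>a \<le> b\<close> by (intro integral_unique smooth2_on_has_integral_Dt[OF q]) auto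
  ultimately have "((\<lambda>x. q x b - q x a) has_field_derivative integral {a..b} (Dr (Dt q) r)) (at r)"
    by (rule has_field_derivative_transform_within_open[OF _ \<open>open I\<close> \<open>r \<in> I\<close>])
  moreover have "((\<lambda>x. q x b - q x a) has_field_derivative Dr q r b - Dr q r a) (at r)"
    using I box \<open>a \<le> b\<close> by (intro DERIV_diff smooth2_on_has_Dr[OF q]) auto
  ultimately show ?thesis by (metis DERIV_unique)
qed

lemma Dr_Dt_eq_Dt_Dr:
  assumes q: "smooth2_on U q" and "open U" and rt: "(r, t) \<in> U"
  shows "Dr (Dt q) r t = Dt (Dr q) r t"
proof -
  obtain A B where "open A" "open B" "(r, t) \<in> A \<times> B" "A \<times> B \<subseteq> U"
    using open_prod_elim[OF \<open>open U\<close> rt] .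
  then have "r \<in> A" "t \<in> B" by simp_all
  obtain d where "d > 0" "ball r d \<subseteq> A" using \<open>open A\<close> \<open>r \<in> A\<close> by (rule openE)
  obtain e where "e > 0" "ball t e \<subseteq> B" using \<open>open B\<close> \<open>t \<in> B\<close> by (rule openE)
  define a b where "a = t - e / 2" and "b = t + e / 2"
  have "{a..b} \<subseteq> ball t e"
    using \<open>e > 0\<close> by (auto simp: a_def b_def dist_real_def)
  then have box: "ball r d \<times> {a..b} \<subseteq> U"
    using \<open>ball r d \<subseteq> A\<close> \<open>ball t e \<subseteq> B\<close> \<open>A \<times> B \<subseteq> U\<close> by blast
  have t: "t \<in> {a<..<b}" using \<open>e > 0\<close> by (simp add: a_def b_def)
  have "continuous_on {a..b} (Dr (Dt q) r)"
    using box \<open>d > 0\<close>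
    by (intro smooth2_on_continuous_on_slice[OF smooth2_on_Dr[OF smooth2_on_Dt[OF q]]]) auto
  from integral_has_real_derivative[OF this, of t] t
  have "((\<lambda>u. integral {a..u} (Dr (Dt q) r)) has_real_derivative Dr (Dt q) r t) (at t)"
    using at_within_Icc_at[of a t b] by simp
  then have "((\<lambda>u. Dr q r a + integral {a..u} (Dr (Dt q) r)) has_real_derivative Dr (Dt q) r t)
      (at t)"
    using DERIV_add[OF DERIV_const[of "Dr q r a"]] by simp
  moreover have "Dr q r a + integral {a..u} (Dr (Dt q) r) = Dr q r u" if "u \<in> {a<..<b}" for u
  proof -
    have "ball r d \<times> {a..u} \<subseteq> U" using box that by auto
    then have "Dr q r u - Dr q r a = integral {a..u} (Dr (Dt q) r)"
      using \<open>d > 0\<close> that by (intro Dr_diff_eq_integral_Dr_Dt[OF q open_ball convex_ball]) auto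
    then show ?thesis by simp
  qed
  ultimately have "(Dr q r has_real_derivative Dr (Dt q) r t) (at t)"
    by (rule has_field_derivative_transform_within_open[OF _ open_greaterThanLessThan t])
  then show ?thesis by (rule sym[OF Dt_eqI])
qed

definition radial_laplacian :: "(real \<Rightarrow> real \<Rightarrow> real) \<Rightarrow> real \<Rightarrow> real \<Rightarrow> real" where
  "radial_laplacian q = (\<lambda>r t. Dr (Dr q) r t + 1 / r * Dr q r t)"

lemma Dt_radial_laplacian:
  assumes q: "smooth2_on U q" and "open U" and rt: "(r, t) \<in> U"
  shows "Dt (radial_laplacian q) r t = radial_laplacian (Dt q) r t"
proof -
  have "open ((\<lambda>s. (s, t)) -` U)"
    using \<open>open U\<close> by (rule continuous_open_vimage) (intro continuous_intros)
  then have "\<forall>\<^sub>F s in nhds r. Dt (Dr q) s t = Dr (Dt q) s t"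
    using rt
    by (intro eventually_mono[OF eventually_nhds_in_open] Dr_Dt_eq_Dt_Dr[OF q \<open>open U\<close>, symmetric])
      auto
  then have "Dr (Dt (Dr q)) r t = Dr (Dr (Dt q)) r t"
    unfolding Dr_def by (rule deriv_cong_ev) simp
  then have rrt: "Dt (Dr (Dr q)) r t = Dr (Dr (Dt q)) r t"
    using Dr_Dt_eq_Dt_Dr[OF smooth2_on_Dr[OF q] \<open>open U\<close> rt] by simp
  have "((\<lambda>s. Dr (Dr q) r s + 1 / r * Dr q r s) has_real_derivative
      Dt (Dr (Dr q)) r t + 1 / r * Dt (Dr q) r t) (at t)"
    using smooth2_on_Dr[OF q] smooth2_on_Dr[OF smooth2_on_Dr[OF q]] rt
    by (intro DERIV_add DERIV_cmult smooth2_on_has_Dt)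
  then show ?thesis
    unfolding radial_laplacian_def rrt Dr_Dt_eq_Dt_Dr[OF q \<open>open U\<close> rt, symmetric]
    by (rule Dt_eqI)
qed

definition log_flux :: "(real \<Rightarrow> real \<Rightarrow> real) \<Rightarrow> real \<Rightarrow> real \<Rightarrow> real" where
  "log_flux q = (\<lambda>r t. q r t - r * ln r * Dr q r t)"

lemma has_Dr_log_flux:
  assumes q: "smooth2_on U q" and rt: "(r, t) \<in> U" and "r > 0"
  shows "((\<lambda>s. log_flux q s t) has_real_derivative - r * ln r * radial_laplacian q r t) (at r)"
proof -
  note q0 = smooth2_on_has_Dr[OF q rt] and q1 = smooth2_on_has_Dr[OF smooth2_on_Dr[OF q] rt]
  show ?thesis
    unfolding log_flux_def radial_laplacian_def
    using \<open>r > 0\<close> by (auto intro!: derivative_eq_intros q0 q1 simp: field_simps)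
qed

lemma smooth1_has_deriv: "smooth1 F \<Longrightarrow> (F has_real_derivative deriv F x) (at x)"
  unfolding smooth1_def
  by (metis DERIV_deriv_iff_real_differentiable funpow_0)

lemma smooth1_deriv: "smooth1 F \<Longrightarrow> smooth1 (deriv F)"
  unfolding smooth1_def by (metis comp_apply funpow_Suc_right)

lemma has_Dt_comp:
  assumes "smooth1 F" "smooth2_on U q" "(r, t) \<in> U"
  shows "((\<lambda>s. F (q r s)) has_real_derivative deriv F (q r t) * Dt q r t) (at t)"
  using smooth1_has_deriv[OF assms(1)] smooth2_on_has_Dt[OF assms(2,3)] by (rule DERIV_chain2)

lemma Dr_Dt_time_weighted:
  assumes "((\<lambda>s. A s t) has_real_derivative A') (at r)"
    and "(B r has_real_derivative B') (at t)"
    and "(C r has_real_derivative C') (at t)"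
  shows "Dr (\<lambda>r t. t * A r t) r t + Dt (\<lambda>r t. t * B r t + C r t) r t = t * (A' + B') + B r t + C'"
proof -
  have "Dr (\<lambda>r t. t * A r t) r t = t * A'"
    by (rule Dr_eqI) (use assms(1) in \<open>auto intro!: derivative_eq_intros\<close>)
  moreover have "Dt (\<lambda>r t. t * B r t + C r t) r t = B r t + t * B' + C'"
    by (rule Dt_eqI) (use assms(2,3) in \<open>auto intro!: derivative_eq_intros\<close>)
  ultimately show ?thesis by (simp add: algebra_simps)
qed

definition westervelt_operator ::
    "real \<Rightarrow> real \<Rightarrow> (real \<Rightarrow> real) \<Rightarrow> (real \<Rightarrow> real \<Rightarrow> real) \<Rightarrow> real \<Rightarrow> real \<Rightarrow> real" where
  "westervelt_operator \<alpha> \<beta> F p = (\<lambda>r t. radial_laplacian p r t + Dt (Dt (\<lambda>r t. F (p r t))) r t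
      + \<alpha> * Dt (Dt (Dt p)) r t + \<beta> * Dt (radial_laplacian p) r t)"

definition westervelt_current_r :: "real \<Rightarrow> (real \<Rightarrow> real \<Rightarrow> real) \<Rightarrow> real \<Rightarrow> real \<Rightarrow> real" where
  "westervelt_current_r \<beta> p = (\<lambda>r t. log_flux p r t + \<beta> * log_flux (Dt p) r t)"

definition westervelt_current_t ::
    "real \<Rightarrow> (real \<Rightarrow> real) \<Rightarrow> (real \<Rightarrow> real \<Rightarrow> real) \<Rightarrow> real \<Rightarrow> real \<Rightarrow> real" where
  "westervelt_current_t \<alpha> F p =
    (\<lambda>r t. - r * ln r * (deriv F (p r t) * Dt p r t + \<alpha> * Dt (Dt p) r t))"

definition westervelt_potential ::
    "real \<Rightarrow> (real \<Rightarrow> real) \<Rightarrow> (real \<Rightarrow> real \<Rightarrow> real) \<Rightarrow> real \<Rightarrow> real \<Rightarrow> real" where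
  "westervelt_potential \<alpha> F p = (\<lambda>r t. r * ln r * (F (p r t) + \<alpha> * Dt p r t))"

context
  fixes F :: "real \<Rightarrow> real" and p :: "real \<Rightarrow> real \<Rightarrow> real"
  assumes F: "smooth1 F" and p: "smooth2_on {z. fst z > 0} p"
begin

lemma has_Dr_westervelt_current_r:
  assumes "r > 0"
  shows "((\<lambda>s. westervelt_current_r \<beta> p s t) has_real_derivative
      - r * ln r * (radial_laplacian p r t + \<beta> * radial_laplacian (Dt p) r t)) (at r)"
proof -
  have "((\<lambda>s. log_flux p s t + \<beta> * log_flux (Dt p) s t) has_real_derivative
      - r * ln r * radial_laplacian p r t + \<beta> * (- r * ln r * radial_laplacian (Dt p) r t)) (at r)"
    using assms
    by (intro DERIV_add DERIV_cmult has_Dr_log_flux[OF p] has_Dr_log_flux[OF smooth2_on_Dt[OF p]])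
      simp_all
  then show ?thesis by (simp add: westervelt_current_r_def algebra_simps)
qed

lemma has_Dt_westervelt_current_t:
  assumes "r > 0"
  shows "(westervelt_current_t \<alpha> F p r has_real_derivative
      - r * ln r * (Dt (Dt (\<lambda>r t. F (p r t))) r t + \<alpha> * Dt (Dt (Dt p)) r t)) (at t)"
proof -
  have rs: "(r, s) \<in> {z. fst z > 0}" for s using assms by simp
  have "Dt (\<lambda>r t. F (p r t)) r = (\<lambda>s. deriv F (p r s) * Dt p r s)"
    by (rule ext, rule Dt_eqI, rule has_Dt_comp[OF F p rs])
  moreover have "((\<lambda>s. deriv F (p r s) * Dt p r s) has_real_derivative
      deriv (deriv F) (p r t) * Dt p r t * Dt p r t + deriv F (p r t) * Dt (Dt p) r t) (at t)"
    by (rule DERIV_cong[OF DERIV_mult[OF has_Dt_comp[OF smooth1_deriv[OF F] p rs]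
          smooth2_on_has_Dt[OF smooth2_on_Dt[OF p] rs]]]) (simp add: algebra_simps)
  ultimately have Dt_Fp_has_derivative: "((\<lambda>s. deriv F (p r s) * Dt p r s) has_real_derivative
      Dt (Dt (\<lambda>r t. F (p r t))) r t) (at t)"
    using Dt_eqI by metis
  show ?thesis
    unfolding westervelt_current_t_def
    by (rule DERIV_cmult, rule DERIV_add[OF Dt_Fp_has_derivative DERIV_cmult])
      (rule smooth2_on_has_Dt[OF smooth2_on_Dt[OF smooth2_on_Dt[OF p]] rs])
qed

lemma has_Dt_westervelt_potential:
  assumes "r > 0"
  shows "(westervelt_potential \<alpha> F p r has_real_derivative - westervelt_current_t \<alpha> F p r t) (at t)"
proof -
  have rt: "(r, t) \<in> {z. fst z > 0}" using assms by simp
  show ?thesis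
    unfolding westervelt_potential_def westervelt_current_t_def
    by (auto intro!: derivative_eq_intros has_Dt_comp[OF F p rt]
        smooth2_on_has_Dt[OF smooth2_on_Dt[OF p] rt] simp: algebra_simps)
qed

lemma westervelt_divergence:
  assumes "r > 0"
  shows "Dr (westervelt_current_r \<beta> p) r t + Dt (westervelt_current_t \<alpha> F p) r t
    = - r * ln r * westervelt_operator \<alpha> \<beta> F p r t"
proof -
  have "open {z::real \<times> real. fst z > 0}"
    by (simp add: open_Collect_less continuous_on_fst)
  then have "Dt (radial_laplacian p) r t = radial_laplacian (Dt p) r t"
    using assms by (intro Dt_radial_laplacian[OF p]) simp_all
  moreover have "Dr (westervelt_current_r \<beta> p) r t
      = - r * ln r * (radial_laplacian p r t + \<beta> * radial_laplacian (Dt p) r t)"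
    using has_Dr_westervelt_current_r[OF assms] by (rule Dr_eqI)
  moreover have "Dt (westervelt_current_t \<alpha> F p) r t
      = - r * ln r * (Dt (Dt (\<lambda>r t. F (p r t))) r t + \<alpha> * Dt (Dt (Dt p)) r t)"
    using has_Dt_westervelt_current_t[OF assms] by (rule Dt_eqI)
  ultimately show ?thesis by (simp add: westervelt_operator_def algebra_simps)
qed

lemma westervelt_divergence_time_weighted:
  assumes "r > 0"
  shows "Dr (\<lambda>r t. t * westervelt_current_r \<beta> p r t) r t
      + Dt (\<lambda>r t. t * westervelt_current_t \<alpha> F p r t + westervelt_potential \<alpha> F p r t) r t
    = - t * r * ln r * westervelt_operator \<alpha> \<beta> F p r t"
proof -
  have "Dr (\<lambda>r t. t * westervelt_current_r \<beta> p r t) r t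
      + Dt (\<lambda>r t. t * westervelt_current_t \<alpha> F p r t + westervelt_potential \<alpha> F p r t) r t
    = t * (Dr (westervelt_current_r \<beta> p) r t + Dt (westervelt_current_t \<alpha> F p) r t)"
    using Dr_Dt_time_weighted[where A = "westervelt_current_r \<beta> p"
        and B = "westervelt_current_t \<alpha> F p" and C = "westervelt_potential \<alpha> F p",
        OF has_Dr_westervelt_current_r[OF assms]
        has_Dt_westervelt_current_t[OF assms] has_Dt_westervelt_potential[OF assms]]
      Dr_eqI[OF has_Dr_westervelt_current_r[OF assms]]
      Dt_eqI[where f = "westervelt_current_t \<alpha> F p", OF has_Dt_westervelt_current_t[OF assms]]
    by simp
  then show ?thesis by (simp add: westervelt_divergence[OF assms])
qed

end

theorem mainTheorem8:
  fixes \<alpha> \<beta> :: real and F :: "real \<Rightarrow> real" and p :: "real \<Rightarrow> real \<Rightarrow> real"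
  assumes F_smooth: "smooth1 F"
    and p_smooth: "smooth2_on {z. fst z > 0} p"
    and eq: "\<And>r t. r > 0 \<Longrightarrow>
        Dr (Dr p) r t + (1 / r) * Dr p r t
      + Dt (Dt (\<lambda>r t. F (p r t))) r t
      + \<alpha> * Dt (Dt (Dt p)) r t
      + \<beta> * Dt (\<lambda>r t. Dr (Dr p) r t + (1 / r) * Dr p r t) r t = 0"
  defines "T1r \<equiv> \<lambda>r t. p r t - r * Dr p r t * ln r
                      + \<beta> * (Dt p r t - r * ln r * Dr (Dt p) r t)"
    and "T1t \<equiv> \<lambda>r t. - r * ln r * (deriv F (p r t) * Dt p r t + \<alpha> * Dt (Dt p) r t)"
    and "T2r \<equiv> \<lambda>r t. t * (p r t - r * Dr p r t * ln r
                      + \<beta> * (Dt p r t - r * ln r * Dr (Dt p) r t))"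
    and "T2t \<equiv> \<lambda>r t. - r * ln r * (t * (deriv F (p r t) * Dt p r t + \<alpha> * Dt (Dt p) r t)
                      - F (p r t) - \<alpha> * Dt p r t)"
  shows "\<forall>r t. r > 0 \<longrightarrow> Dr T1r r t + Dt T1t r t = 0 \<and> Dr T2r r t + Dt T2t r t = 0"
proof (intro allI impI)
  fix r t :: real
  assume r: "r > 0"
  have "westervelt_operator \<alpha> \<beta> F p r t = 0"
    unfolding westervelt_operator_def radial_laplacian_def using eq[OF r] by simp
  moreover have "T1r = westervelt_current_r \<beta> p" "T2r = (\<lambda>r t. t * westervelt_current_r \<beta> p r t)"
    unfolding T1r_def T2r_def westervelt_current_r_def log_flux_def
    by (simp_all add: fun_eq_iff algebra_simps)
  moreover have "T1t = westervelt_current_t \<alpha> F p"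
      "T2t = (\<lambda>r t. t * westervelt_current_t \<alpha> F p r t + westervelt_potential \<alpha> F p r t)"
    unfolding T1t_def T2t_def westervelt_current_t_def westervelt_potential_def
    by (simp_all add: fun_eq_iff algebra_simps)
  ultimately show "Dr T1r r t + Dt T1t r t = 0 \<and> Dr T2r r t + Dt T2t r t = 0"
    using westervelt_divergence[OF F_smooth p_smooth r]
      westervelt_divergence_time_weighted[OF F_smooth p_smooth r]
    by simp
qed

end
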